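(* Let $I\subseteq\mathbb{R}$ be an open interval, let $f\colon I\to(0,\infty)$ be a differentiable, concave and strictly increasing function, let $s,t\in I$ with $s<t$, and let $\lambda\in(0,1)$. Then $$f((1-\lambda)s+\lambda t)\leq \frac{f'(s)}{f'(t)}\cdot\big((1-\lambda)f(s)+\lambda f(t)\big).$$ *)

theory Defs
  imports "HOL-Analysis.Analysis"
begin

end

theory Submission
  imports Defs
begin

text \<open>
  Let \<open>a = f' s\<close>, \<open>b = f' t\<close> and \<open>x = (1 - lam) s + lam t\<close>. Concavity puts the graph of \<open>f\<close>
  below its tangents: the tangent at \<open>s\<close> gives \<open>f x \<le> f s + a lam (t - s)\<close>, the tangent at \<open>t\<close>
  gives \<open>b (t - s) \<le> f t - f s\<close>, and together they give \<open>b \<le> a\<close>; strict monotonicity makes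
  \<open>b > 0\<close>. Hence
  \<open>b f x \<le> b f s + a lam b (t - s) \<le> a f s + a lam (f t - f s) = a ((1 - lam) f s + lam f t)\<close>,
  where the middle step uses \<open>b \<le> a\<close> and \<open>f s > 0\<close>.
\<close>

lemma concave_on_imp_below_tangent:
  fixes f :: "real \<Rightarrow> real"
  assumes "concave_on A f" and "connected A" and "c \<in> interior A" and "x \<in> A"
    and "(f has_field_derivative f') (at c within A)"
  shows "f x - f c \<le> f' * (x - c)"
proof -
  have "- f' * (x - c) \<le> (- f x) - (- f c)"
    using assms by (intro convex_on_imp_above_tangent[where A = A] DERIV_minus)
      (simp_all add: concave_on_def)
  then show ?thesis by simp
qed

lemma concave_on_deriv_antimono:
  fixes f :: "real \<Rightarrow> real"
  assumes concave: "concave_on A f" and conn: "connected A"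
    and s: "s \<in> interior A" and t: "t \<in> interior A" and "s < t"
    and fs: "(f has_field_derivative a) (at s within A)"
    and ft: "(f has_field_derivative b) (at t within A)"
  shows "b \<le> a"
proof -
  have "f t - f s \<le> a * (t - s)"
    using concave_on_imp_below_tangent[OF concave conn s _ fs] t interior_subset by blast
  moreover have "f s - f t \<le> b * (s - t)"
    using concave_on_imp_below_tangent[OF concave conn t _ ft] s interior_subset by blast
  ultimately have "b * (t - s) \<le> a * (t - s)" by (simp add: algebra_simps)
  then show ?thesis using \<open>s < t\<close> by simp
qed

lemma strict_mono_concave_on_deriv_pos:
  fixes f :: "real \<Rightarrow> real"
  assumes concave: "concave_on A f" and conn: "connected A" and mono: "strict_mono_on A f"
    and t: "t \<in> interior A" and ft: "(f has_field_derivative b) (at t within A)"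
  shows "b > 0"
proof -
  obtain e where "e > 0" and ball: "ball t e \<subseteq> A"
    using t by (meson mem_interior)
  define z where "z = t + e / 2"
  have "z \<in> A" "t < z"
    using ball \<open>e > 0\<close> by (auto simp: z_def dist_real_def)
  then have "f t < f z"
    using mono t interior_subset by (auto simp: strict_mono_on_def)
  also have "f z \<le> f t + b * (z - t)"
    using concave_on_imp_below_tangent[OF concave conn t \<open>z \<in> A\<close> ft] by simp
  finally show ?thesis
    using \<open>t < z\<close> by (simp add: zero_less_mult_iff)
qed

lemma concave_on_le_deriv_ratio_mult_convex_combination:
  fixes f :: "real \<Rightarrow> real"
  assumes concave: "concave_on A f" and conn: "connected A"
    and s: "s \<in> interior A" and t: "t \<in> interior A" and "s < t"
    and fs: "(f has_field_derivative a) (at s within A)"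
    and ft: "(f has_field_derivative b) (at t within A)"
    and "b > 0" and "f s > 0" and "0 \<le> lam" and "lam \<le> 1"
  shows "f ((1 - lam) * s + lam * t) \<le> a / b * ((1 - lam) * f s + lam * f t)"
proof -
  define x where "x = (1 - lam) * s + lam * t"
  have "x \<in> A"
    using convexD_alt[OF concave_on_imp_convex[OF concave], of s t lam] s t interior_subset
      \<open>0 \<le> lam\<close> \<open>lam \<le> 1\<close> by (auto simp: x_def)
  have tangent_s: "f x - f s \<le> a * (lam * (t - s))"
    using concave_on_imp_below_tangent[OF concave conn s \<open>x \<in> A\<close> fs]
    by (simp add: x_def algebra_simps)
  have tangent_t: "b * (t - s) \<le> f t - f s"
    using concave_on_imp_below_tangent[OF concave conn t _ ft] s interior_subset
    by (force simp: algebra_simps)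
  have "b \<le> a"
    using concave_on_deriv_antimono[OF concave conn s t \<open>s < t\<close> fs ft] .
  have "b * f x \<le> b * f s + a * lam * (b * (t - s))"
    using mult_left_mono[OF tangent_s, of b] \<open>b > 0\<close> by (simp add: algebra_simps)
  also have "\<dots> \<le> a * f s + a * lam * (f t - f s)"
  proof (rule add_mono)
    show "b * f s \<le> a * f s"
      using \<open>b \<le> a\<close> \<open>f s > 0\<close> by simp
    show "a * lam * (b * (t - s)) \<le> a * lam * (f t - f s)"
      using tangent_t \<open>b > 0\<close> \<open>b \<le> a\<close> \<open>0 \<le> lam\<close> by (intro mult_left_mono) auto
  qed
  also have "\<dots> = a * ((1 - lam) * f s + lam * f t)"
    by (simp add: algebra_simps)
  finally show ?thesis
    using \<open>b > 0\<close> by (simp add: x_def field_simps)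
qed

theorem lemma6:
  fixes I :: "real set" and f :: "real \<Rightarrow> real" and s t lam :: real
  assumes "open I" and "is_interval I"
    and "\<And>x. x \<in> I \<Longrightarrow> f x > 0"
    and "\<And>x. x \<in> I \<Longrightarrow> f differentiable (at x)"
    and "concave_on I f"
    and "strict_mono_on I f"
    and "s \<in> I" and "t \<in> I" and "s < t"
    and "0 < lam" and "lam < 1"
  shows "f ((1 - lam) * s + lam * t) \<le> deriv f s / deriv f t * ((1 - lam) * f s + lam * f t)"
proof -
  have conn: "connected I"
    using \<open>is_interval I\<close> by (simp add: is_interval_connected)
  have int: "interior I = I"
    using \<open>open I\<close> by (simp add: interior_open)
  have deriv: "(f has_field_derivative deriv f c) (at c within I)" if "c \<in> I" for c
    using assms(4)[OF that] by (simp add: DERIV_deriv_iff_real_differentiable has_field_derivative_at_within)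
  have "deriv f t > 0"
    using strict_mono_concave_on_deriv_pos[OF \<open>concave_on I f\<close> conn \<open>strict_mono_on I f\<close>]
      deriv \<open>t \<in> I\<close> int by simp
  then show ?thesis
    using concave_on_le_deriv_ratio_mult_convex_combination[OF \<open>concave_on I f\<close> conn]
      deriv assms(3,7-11) int by simp
qed

end
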